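(* Let $\mathbf{A}_C\in\{0,1\}^{U\times N}$, $\mathcal{E}=\{(i,j): [\mathbf{A}_C]_{ij}=1\}$, $\mathbf{B}=\mathbf{A}_C^T\mathbf{A}_C$, and let $\mathbf{u}$ be a unit-norm eigenvector of $\mathbf{B}$ with nonnegative entries associated with $\lambda_{\max}(\mathbf{B})$. For $\mathcal{E}_{\mathcal{R}}\subseteq\mathcal{E}$ define $$f(\mathcal{E}_{\mathcal{R}})=2\sum_{(i,j)\in\mathcal{E}_{\mathcal{R}}}\mathbf{u}^T\mathbf{A}_C^T\mathbf{e}^U_i[\mathbf{u}]_j-\sum_{i=1}^{U}\ \sum_{j:(i,j)\in\mathcal{E}_{\mathcal{R}}}\ \sum_{s:(i,s)\in\mathcal{E}_{\mathcal{R}}}[\mathbf{u}]_j[\mathbf{u}]_s .$$ Then $f$ is a monotone (nondecreasing) submodular set function on subsets of $\mathcal{E}$; that is, for all $\mathcal{E}_{\mathcal{R}1}\subseteq\mathcal{E}_{\mathcal{R}2}\subseteq\mathcal{E}$ we have $f(\mathcal{E}_{\mathcal{R}2})\ge f(\mathcal{E}_{\mathcal{R}1})$, and for every $e\in\mathcal{E}\setminus\mathcal{E}_{\mathcal{R}2}$, $$f(\mathcal{E}_{\mathcal{R}2}\cup\{e\})-f(\mathcal{E}_{\mathcal{R}2})\le f(\mathcal{E}_{\mathcal{R}1}\cup\{e\})-f(\mathcal{E}_{\mathcal{R}1}).$$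
   Context: $\mathbf{A}_C$ is the adjacency matrix of a bipartite user–host access graph with $U$ users and $N$ hosts; $\mathcal{E}$ is its edge set. $\mathbf{e}^U_i$ is the $U\times1$ canonical basis vector with $1$ in position $i$. $\lambda_{\max}(\mathbf{B})$ is the largest eigenvalue of $\mathbf{B}$; $[\mathbf{u}]_j$ is the $j$-th entry of $\mathbf{u}$. *)

theory Defs
  imports "HOL-Analysis.Analysis"
begin

text \<open>Users are indexed by the finite type 'u (U = CARD('u)), hosts by 'n (N = CARD('n)).
  The access matrix A_C is a real U x N matrix with 0/1 entries.\<close>

definition edge_set :: "real^'n^'u \<Rightarrow> ('u \<times> 'n) set" where
  "edge_set A = {(i, j). A $ i $ j = 1}"

definition is_eigenvalue :: "real^'n^'n \<Rightarrow> real \<Rightarrow> bool" where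
  "is_eigenvalue B l \<longleftrightarrow> (\<exists>v. v \<noteq> 0 \<and> B *v v = l *\<^sub>R v)"

text \<open>Largest eigenvalue (B = A^T A is symmetric, so all eigenvalues are real).\<close>
definition lambda_max :: "real^'n^'n \<Rightarrow> real" where
  "lambda_max B = Max {l. is_eigenvalue B l}"

definition basis_vec :: "'u::finite \<Rightarrow> real^'u" where
  "basis_vec i = axis i 1"

definition f_obj :: "real^'n^'u \<Rightarrow> real^'n \<Rightarrow> ('u \<times> 'n) set \<Rightarrow> real" where
  "f_obj A u ER =
     2 * (\<Sum>(i, j)\<in>ER. (u \<bullet> (transpose A *v basis_vec i)) * u $ j)
     - (\<Sum>i\<in>UNIV. \<Sum>j\<in>{j. (i, j) \<in> ER}. \<Sum>s\<in>{s. (i, s) \<in> ER}. u $ j * u $ s)"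

end

theory Submission
  imports Defs
begin

text \<open>Writing \<open>S\<^sub>i(E) = \<Sum>\<^bsub>(i,j)\<in>E\<^esub> u\<^sub>j\<close> and \<open>a\<^sub>i = (A\<^sub>C u)\<^sub>i\<close>, the objective splits over users as
  \<open>f(E) = \<Sum>\<^sub>i (2 a\<^sub>i S\<^sub>i(E) - S\<^sub>i(E)\<^sup>2)\<close>. Each summand is a concave quadratic in \<open>S\<^sub>i\<close>, nondecreasing
  on \<open>[0, a\<^sub>i]\<close>, and \<open>S\<^sub>i\<close> is a nonnegative modular function of \<open>E\<close> bounded by \<open>a\<^sub>i\<close> on subsets of the
  edge set. Monotonicity follows, and concavity gives diminishing returns, because adding the
  edge \<open>(k, l)\<close> only raises \<open>S\<^sub>k\<close> by \<open>u\<^sub>l \<ge> 0\<close>.\<close>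

definition incident_sum :: "real^'n \<Rightarrow> ('u \<times> 'n) set \<Rightarrow> 'u \<Rightarrow> real" where
  "incident_sum u E i = (\<Sum>j\<in>{j. (i, j) \<in> E}. u $ j)"

lemma inner_transpose_mult_basis_vec:
  fixes A :: "real^'n^'u" and u :: "real^'n"
  shows "u \<bullet> (transpose A *v basis_vec i) = (A *v u) $ i"
proof -
  have "transpose A *v basis_vec i = A $ i"
    by (simp add: vec_eq_iff matrix_vector_mult_def transpose_def basis_vec_def axis_def
        if_distrib cong: if_cong)
  then show ?thesis
    by (simp add: inner_vec_def matrix_vector_mult_def mult.commute)
qed

lemma f_obj_eq_sum_users:
  fixes A :: "real^'n^'u" and u :: "real^'n"
  shows "f_obj A u E =
    (\<Sum>i\<in>UNIV. 2 * (A *v u) $ i * incident_sum u E i - (incident_sum u E i)\<^sup>2)"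
proof -
  have "(\<Sum>(i, j)\<in>E. (u \<bullet> (transpose A *v basis_vec i)) * u $ j)
      = (\<Sum>(i, j)\<in>Sigma UNIV (\<lambda>i. {j. (i, j) \<in> E}). (A *v u) $ i * u $ j)"
    using inner_transpose_mult_basis_vec[of u A] by (intro sum.cong) auto
  also have "\<dots> = (\<Sum>i\<in>UNIV. (A *v u) $ i * incident_sum u E i)"
    by (simp add: sum.Sigma[symmetric] incident_sum_def sum_distrib_left)
  finally have linear_part: "(\<Sum>(i, j)\<in>E. (u \<bullet> (transpose A *v basis_vec i)) * u $ j)
      = (\<Sum>i\<in>UNIV. (A *v u) $ i * incident_sum u E i)" .
  have quadratic_part: "(\<Sum>j\<in>{j. (i, j) \<in> E}. \<Sum>s\<in>{s. (i, s) \<in> E}. u $ j * u $ s)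
      = (incident_sum u E i)\<^sup>2" for i
    by (simp add: incident_sum_def power2_eq_square sum_product)
  show ?thesis
    unfolding f_obj_def linear_part quadratic_part
    by (simp add: sum_distrib_left sum_subtractf mult.assoc)
qed

lemma incident_sum_nonneg:
  assumes "\<forall>j. u $ j \<ge> 0"
  shows "0 \<le> incident_sum u E i"
  unfolding incident_sum_def using assms by (intro sum_nonneg) auto

lemma incident_sum_mono:
  assumes "E1 \<subseteq> E2" and "\<forall>j. u $ j \<ge> 0"
  shows "incident_sum u E1 i \<le> incident_sum u E2 i"
  unfolding incident_sum_def using assms by (intro sum_mono2) auto

lemma incident_sum_le_mult:
  fixes A :: "real^'n^'u" and u :: "real^'n"
  assumes A01: "\<forall>i j. A $ i $ j \<in> {0, 1}" and nonneg: "\<forall>j. u $ j \<ge> 0"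
    and E: "E \<subseteq> edge_set A"
  shows "incident_sum u E i \<le> (A *v u) $ i"
proof -
  have "incident_sum u E i = (\<Sum>j\<in>{j. (i, j) \<in> E}. A $ i $ j * u $ j)"
    unfolding incident_sum_def using E by (intro sum.cong) (auto simp: edge_set_def)
  also have "\<dots> \<le> (\<Sum>j\<in>UNIV. A $ i $ j * u $ j)"
  proof (rule sum_mono2)
    fix j
    have "0 \<le> A $ i $ j"
      using A01[rule_format, of i j] by auto
    then show "0 \<le> A $ i $ j * u $ j"
      using nonneg by simp
  qed auto
  finally show ?thesis
    by (simp add: matrix_vector_mult_def)
qed

lemma incident_sum_insert:
  assumes "(k, l) \<notin> E"
  shows "incident_sum u (E \<union> {(k, l)}) i = incident_sum u E i + (if i = k then u $ l else 0)"
proof (cases "i = k")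
  case True
  then have "{j. (i, j) \<in> E \<union> {(k, l)}} = insert l {j. (i, j) \<in> E}"
    and "l \<notin> {j. (i, j) \<in> E}"
    using assms by auto
  then show ?thesis
    using True by (simp add: incident_sum_def)
next
  case False
  then have "{j. (i, j) \<in> E \<union> {(k, l)}} = {j. (i, j) \<in> E}"
    by auto
  then show ?thesis
    using False by (simp add: incident_sum_def)
qed

lemma concave_quadratic_mono:
  fixes a x y :: real
  assumes "0 \<le> x" "x \<le> y" "y \<le> a"
  shows "2 * a * x - x\<^sup>2 \<le> 2 * a * y - y\<^sup>2"
proof -
  have "(2 * a * y - y\<^sup>2) - (2 * a * x - x\<^sup>2) = (y - x) * ((a - x) + (a - y))"
    by (simp add: algebra_simps power2_eq_square)
  also have "\<dots> \<ge> 0"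
    using assms by (intro mult_nonneg_nonneg) auto
  finally show ?thesis
    by simp
qed

lemma concave_quadratic_increment_antimono:
  fixes a x y c :: real
  assumes "x \<le> y" "0 \<le> c"
  shows "(2 * a * (y + c) - (y + c)\<^sup>2) - (2 * a * y - y\<^sup>2)
       \<le> (2 * a * (x + c) - (x + c)\<^sup>2) - (2 * a * x - x\<^sup>2)"
proof -
  have "((2 * a * (x + c) - (x + c)\<^sup>2) - (2 * a * x - x\<^sup>2))
      - ((2 * a * (y + c) - (y + c)\<^sup>2) - (2 * a * y - y\<^sup>2)) = 2 * c * (y - x)"
    by (simp add: algebra_simps power2_eq_square)
  also have "\<dots> \<ge> 0"
    using assms by simp
  finally show ?thesis
    by simp
qed

lemma f_obj_mono:
  fixes A :: "real^'n^'u" and u :: "real^'n"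
  assumes A01: "\<forall>i j. A $ i $ j \<in> {0, 1}" and nonneg: "\<forall>j. u $ j \<ge> 0"
    and "E1 \<subseteq> E2" and "E2 \<subseteq> edge_set A"
  shows "f_obj A u E1 \<le> f_obj A u E2"
  unfolding f_obj_eq_sum_users
proof (rule sum_mono)
  fix i
  show "2 * (A *v u) $ i * incident_sum u E1 i - (incident_sum u E1 i)\<^sup>2
      \<le> 2 * (A *v u) $ i * incident_sum u E2 i - (incident_sum u E2 i)\<^sup>2"
    using assms
    by (intro concave_quadratic_mono incident_sum_nonneg incident_sum_mono incident_sum_le_mult)
qed

lemma f_obj_insert_diff:
  fixes A :: "real^'n^'u" and u :: "real^'n"
  assumes "(k, l) \<notin> E"
  shows "f_obj A u (E \<union> {(k, l)}) - f_obj A u E =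
    (\<Sum>i\<in>UNIV. let s = incident_sum u E i; c = (if i = k then u $ l else 0) in
       (2 * (A *v u) $ i * (s + c) - (s + c)\<^sup>2) - (2 * (A *v u) $ i * s - s\<^sup>2))"
  by (simp only: f_obj_eq_sum_users incident_sum_insert[OF assms] sum_subtractf Let_def)

lemma f_obj_submodular:
  fixes A :: "real^'n^'u" and u :: "real^'n"
  assumes nonneg: "\<forall>j. u $ j \<ge> 0"
    and "E1 \<subseteq> E2" and "e \<notin> E2"
  shows "f_obj A u (E2 \<union> {e}) - f_obj A u E2 \<le> f_obj A u (E1 \<union> {e}) - f_obj A u E1"
proof -
  obtain k l where e: "e = (k, l)"
    by (cases e)
  have notin1: "(k, l) \<notin> E1" and notin2: "(k, l) \<notin> E2"
    using assms e by auto
  show ?thesis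
    unfolding e f_obj_insert_diff[OF notin1] f_obj_insert_diff[OF notin2] Let_def
  proof (intro sum_mono concave_quadratic_increment_antimono)
    show "incident_sum u E1 i \<le> incident_sum u E2 i" for i
      using assms by (intro incident_sum_mono)
    show "0 \<le> (if i = k then u $ l else 0)" for i
      using nonneg by simp
  qed
qed

theorem theorem1:
  fixes A :: "real^'n^'u" and u :: "real^'n"
  assumes A01: "\<forall>i j. A $ i $ j \<in> {0, 1}"
    and unit: "norm u = 1"
    and nonneg: "\<forall>j. u $ j \<ge> 0"
    and eig: "(transpose A ** A) *v u = lambda_max (transpose A ** A) *\<^sub>R u"
  shows "(\<forall>E1 E2. E1 \<subseteq> E2 \<and> E2 \<subseteq> edge_set A \<longrightarrow> f_obj A u E2 \<ge> f_obj A u E1)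
       \<and> (\<forall>E1 E2 e. E1 \<subseteq> E2 \<and> E2 \<subseteq> edge_set A \<and> e \<in> edge_set A - E2 \<longrightarrow>
            f_obj A u (E2 \<union> {e}) - f_obj A u E2 \<le> f_obj A u (E1 \<union> {e}) - f_obj A u E1)"
  using f_obj_mono[OF A01 nonneg] f_obj_submodular[OF nonneg] by blast

end
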